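(* Let $\alpha\ge1$, $N\ge2$, and let $\mathbf{X}^\wedge(t)$ be the Markov chain with generator $\mathcal{L}_{N,\alpha}$ started from $\wedge=(N,\dots,N)$. Then for every $k\in\{1,\dots,N-1\}$ and every $t\ge0$, $$\mathbb{E}[X^\wedge_k(t)]\le k+2Ne^{-\mathrm{gap}_Nt},\qquad \mathrm{gap}_N=1-\cos(\pi/N).$$ In particular, for $K\in\mathbb{N}$, $u_i=\lfloor iN/K\rfloor$ and $W(x)=\sum_{i=1}^{K-1}(x_{u_i}-u_i)$, the law $\mu_t$ of $\mathbf{X}^\wedge(t)$ satisfies $\mu_t(W)\le2KNe^{-\mathrm{gap}_Nt}$ for all $t\ge0$.
   Context: $\Omega_N=\{x\in\mathbb{R}^{N-1}:0\le x_1\le\dots\le x_{N-1}\le N\}$, $x_0=0,x_N=N$; $\rho_\alpha(u)=\frac{\Gamma(2\alpha)}{\Gamma(\alpha)^2}[u(1-u)]^{\alpha-1}$; $(\mathcal{L}_{N,\alpha}f)(x)=\sum_{i=1}^{N-1}\int_0^1(f(x^{(i,u)})-f(x))\rho_\alpha(u)du$ with $x^{(i,u)}_j=x_j$ ($j\ne i$), $x^{(i,u)}_i=ux_{i-1}+(1-u)x_{i+1}$. *)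

theory Defs
  imports "HOL-Analysis.Analysis"
begin

text \<open>Configurations x = (x_0, x_1, ..., x_N) are functions nat to real; x_0 = 0 and
  x_N = N are the fixed boundary values, coordinates 1..N-1 move.\<close>

definition rho :: "real \<Rightarrow> real \<Rightarrow> real" where
  "rho \<alpha> u = Gamma (2 * \<alpha>) / (Gamma \<alpha>)^2 * (u * (1 - u)) powr (\<alpha> - 1)"

definition resample :: "(nat \<Rightarrow> real) \<Rightarrow> nat \<Rightarrow> real \<Rightarrow> nat \<Rightarrow> real" where
  "resample x i u = x(i := u * x (i - 1) + (1 - u) * x (i + 1))"

definition gen :: "nat \<Rightarrow> real \<Rightarrow> ((nat \<Rightarrow> real) \<Rightarrow> real) \<Rightarrow> (nat \<Rightarrow> real) \<Rightarrow> real" where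
  "gen N \<alpha> f x = (\<Sum>i = 1..N - 1. integral {0..1} (\<lambda>u. (f (resample x i u) - f x) * rho \<alpha> u))"

text \<open>The generator is bounded (total jump rate N-1), so the transition semigroup of the
  Markov chain is exp(tL) = sum_n t^n L^n / n!; expectations E_x[f(X(t))] = semigroup N alpha t f x.\<close>
definition semigroup :: "nat \<Rightarrow> real \<Rightarrow> real \<Rightarrow> ((nat \<Rightarrow> real) \<Rightarrow> real) \<Rightarrow> (nat \<Rightarrow> real) \<Rightarrow> real" where
  "semigroup N \<alpha> t f x = (\<Sum>n. t ^ n / fact n * ((gen N \<alpha> ^^ n) f) x)"

definition wedge :: "nat \<Rightarrow> nat \<Rightarrow> real" where
  "wedge N i = (if i = 0 then 0 else real N)"

definition gap :: "nat \<Rightarrow> real" where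
  "gap N = 1 - cos (pi / real N)"

definition Wfun :: "nat \<Rightarrow> nat \<Rightarrow> (nat \<Rightarrow> real) \<Rightarrow> real" where
  "Wfun N K x = (\<Sum>i = 1..K - 1. x (i * N div K) - real (i * N div K))"

end

(*
  Acting on an affine observable, the generator only sees the mean drift: since rho_alpha has
  mean 1/2, resampling site i moves x_i on average to the midpoint of its neighbours.  Hence
  E[X(t)] solves the discrete heat equation for half the Dirichlet Laplacian with boundary
  values 0 and N.  Expanding the wedge in the sine eigenbasis gives
    E[X_k(t)] = k + sum_m cot(m pi / 2N) sin(m k pi / N) exp(-(1 - cos(m pi / N)) t).
  The coefficients lie in [0, N] and 1 - cos(m pi / N) >= m gap_N, so once exp(-gap_N t) <= 1/2
  the sum is dominated by a geometric series of total at most 2N exp(-gap_N t); for smaller t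
  the bound E[X_k(t)] <= N suffices.
*)
theory Submission
  imports Defs
begin

lemma cot_mul_sin_telescope:
  fixes y :: real
  assumes "sin (y / 2) \<noteq> 0"
  shows "cot (y / 2) * sin (real k * y) = (\<Sum>l=1..k. cos (real l * y) + cos (real (l - 1) * y))"
proof (induction k)
  case 0
  then show ?case by simp
next
  case (Suc k)
  have half_angles: "(real (Suc k) * y - real k * y) / 2 = y / 2"
      "(real (Suc k) * y + real k * y) / 2 = (2 * real k + 1) * y / 2"
    by (simp_all add: algebra_simps)
  have "sin (real (Suc k) * y) - sin (real k * y) = 2 * sin (y / 2) * cos ((2 * real k + 1) * y / 2)"
    using sin_diff_sin[of "real (Suc k) * y" "real k * y"] unfolding half_angles by simp
  moreover have "cos (real (Suc k) * y) + cos (real k * y) = 2 * cos ((2 * real k + 1) * y / 2) * cos (y / 2)"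
    using cos_plus_cos[of "real (Suc k) * y" "real k * y"] unfolding half_angles by simp
  ultimately show ?case
    using Suc assms by (simp add: cot_def algebra_simps)
qed

lemma sin_half_mul_sum_cos:
  fixes x :: real
  shows "2 * sin (x / 2) * (\<Sum>m=1..M. cos (real m * x)) = sin ((real M + 1 / 2) * x) - sin (x / 2)"
proof (induction M)
  case 0
  then show ?case by simp
next
  case (Suc M)
  have half_angles: "((real (Suc M) + 1 / 2) * x - (real M + 1 / 2) * x) / 2 = x / 2"
      "((real (Suc M) + 1 / 2) * x + (real M + 1 / 2) * x) / 2 = real (Suc M) * x"
    by (simp_all add: algebra_simps)
  have "2 * sin (x / 2) * cos (real (Suc M) * x)
      = sin ((real (Suc M) + 1 / 2) * x) - sin ((real M + 1 / 2) * x)"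
    using sin_diff_sin[of "(real (Suc M) + 1 / 2) * x" "(real M + 1 / 2) * x"] unfolding half_angles by simp
  then show ?case
    using Suc by (simp add: distrib_left)
qed

lemma sum_cos_multiples:
  assumes "0 < p" "p < 2 * N"
  shows "(\<Sum>m=1..N-1. cos (real p * (real m * pi / real N))) = - (1 + (-1) ^ p) / 2"
proof -
  define x where "x = real p * pi / real N"
  have "0 < x / 2" "x / 2 < pi"
    using assms by (simp_all add: x_def field_simps)
  then have sin_pos: "sin (x / 2) > 0"
    by (rule sin_gt_zero)
  have "(real (N - 1) + 1 / 2) * x = real p * pi - x / 2"
    using assms by (simp add: x_def of_nat_diff field_simps)
  then have "sin ((real (N - 1) + 1 / 2) * x) = - ((-1) ^ p * sin (x / 2))"
    by (simp add: sin_diff)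
  with sin_half_mul_sum_cos[of x "N - 1"]
  have "sin (x / 2) * (1 + 2 * (\<Sum>m=1..N-1. cos (real m * x)) + (-1) ^ p) = 0"
    by (simp add: algebra_simps)
  with sin_pos have "1 + 2 * (\<Sum>m=1..N-1. cos (real m * x)) + (-1) ^ p = 0"
    by simp
  moreover have "cos (real p * (real m * pi / real N)) = cos (real m * x)" for m
    by (simp add: x_def mult_ac)
  ultimately show ?thesis
    by (simp add: field_simps)
qed

text \<open>The coefficients of the wedge minus its linear part in the Dirichlet sine basis.\<close>
lemma sum_cot_mul_sin:
  assumes "N \<ge> 2" "1 \<le> k" "k \<le> N"
  shows "(\<Sum>m=1..N-1. cot (real m * pi / (2 * real N)) * sin (real m * real k * pi / real N))
       = real N - real k"
proof -
  define C where "C l = (\<Sum>m=1..N-1. cos (real l * (real m * pi / real N)))" for l :: nat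
  have C_values: "C l = (if l = 0 then real N - 1 else - (1 + (-1) ^ l) / 2)" if "l \<le> N" for l
    using that assms sum_cos_multiples[of l N] by (simp add: C_def of_nat_diff)
  have telescope: "(\<Sum>l=1..j. C l + C (l - 1)) = real N - real j" if "1 \<le> j" "j \<le> N" for j
    using that by (induction j) (auto simp: C_values field_simps)
  have term_eq: "cot (real m * pi / (2 * real N)) * sin (real m * real k * pi / real N)
      = (\<Sum>l=1..k. cos (real l * (real m * pi / real N)) + cos (real (l - 1) * (real m * pi / real N)))"
    if "m \<in> {1..N-1}" for m
  proof -
    have "0 < real m * pi / real N / 2" "real m * pi / real N / 2 < pi"
      using that assms by (auto simp: field_simps)
    then have "sin (real m * pi / real N / 2) \<noteq> 0"
      using sin_gt_zero by force
    from cot_mul_sin_telescope[OF this, of k] show ?thesis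
      by (simp add: mult_ac)
  qed
  have "(\<Sum>m=1..N-1. cot (real m * pi / (2 * real N)) * sin (real m * real k * pi / real N))
      = (\<Sum>m=1..N-1. \<Sum>l=1..k.
           cos (real l * (real m * pi / real N)) + cos (real (l - 1) * (real m * pi / real N)))"
    using term_eq by (rule sum.cong[OF refl])
  also have "\<dots> = (\<Sum>l=1..k. C l + C (l - 1))"
    unfolding C_def by (subst sum.swap) (simp add: sum.distrib)
  also have "\<dots> = real N - real k"
    using telescope assms by simp
  finally show ?thesis .
qed

definition half_laplacian :: "nat \<Rightarrow> (nat \<Rightarrow> real) \<Rightarrow> nat \<Rightarrow> real" where
  "half_laplacian N x j = (if 1 \<le> j \<and> j \<le> N - 1 then (x (j - 1) + x (j + 1)) / 2 - x j else 0)"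

definition neighbour_average :: "nat \<Rightarrow> (nat \<Rightarrow> real) \<Rightarrow> nat \<Rightarrow> real" where
  "neighbour_average N x j = x j + half_laplacian N x j"

definition sine_mode :: "nat \<Rightarrow> nat \<Rightarrow> nat \<Rightarrow> real" where
  "sine_mode N m j = sin (real m * real j * pi / real N)"

definition mode_cos :: "nat \<Rightarrow> nat \<Rightarrow> real" where
  "mode_cos N m = cos (real m * pi / real N)"

definition wedge_coeff :: "nat \<Rightarrow> nat \<Rightarrow> real" where
  "wedge_coeff N m = cot (real m * pi / (2 * real N))"

lemma sine_mode_0 [simp]: "sine_mode N m 0 = 0"
  by (simp add: sine_mode_def)

lemma sine_mode_N [simp]: "N > 0 \<Longrightarrow> sine_mode N m N = 0"
  by (simp add: sine_mode_def)

lemma sine_mode_neighbours: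
  assumes "1 \<le> j"
  shows "sine_mode N m (j - 1) + sine_mode N m (j + 1) = 2 * mode_cos N m * sine_mode N m j"
proof -
  have "(real m * real (j + 1) * pi / real N + real m * real (j - 1) * pi / real N) / 2
        = real m * real j * pi / real N"
      "(real m * real (j + 1) * pi / real N - real m * real (j - 1) * pi / real N) / 2
        = real m * pi / real N"
    using assms by (simp_all add: of_nat_diff add_divide_distrib diff_divide_distrib algebra_simps)
  then show ?thesis
    using sin_plus_sin[of "real m * real (j + 1) * pi / real N" "real m * real (j - 1) * pi / real N"]
    unfolding sine_mode_def mode_cos_def by (simp add: algebra_simps)
qed

text \<open>The linear part is harmonic and each sine mode is an eigenvector with eigenvalue
  \<open>cos (m \<pi> / N) - 1\<close>.\<close>
lemma half_laplacian_sine_expansion: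
  assumes y: "\<And>j. j \<le> N \<Longrightarrow> y j = c * real j + (\<Sum>m=1..N-1. b m * sine_mode N m j)"
    and "j \<le> N"
  shows "half_laplacian N y j = (\<Sum>m=1..N-1. b m * (mode_cos N m - 1) * sine_mode N m j)"
proof (cases "1 \<le> j \<and> j \<le> N - 1")
  case True
  have "y (j - 1) + y (j + 1) = 2 * c * real j
      + (\<Sum>m=1..N-1. b m * (sine_mode N m (j - 1) + sine_mode N m (j + 1)))"
  proof -
    have "j - 1 \<le> N" "j + 1 \<le> N"
      using True by auto
    then show ?thesis
      using True y[of "j - 1"] y[of "j + 1"] by (simp add: of_nat_diff sum.distrib algebra_simps)
  qed
  also have "\<dots> = 2 * c * real j + 2 * (\<Sum>m=1..N-1. b m * mode_cos N m * sine_mode N m j)"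
    using True sine_mode_neighbours[of j N] by (simp add: sum_distrib_left algebra_simps)
  finally show ?thesis
    using True y[OF \<open>j \<le> N\<close>] by (simp add: half_laplacian_def sum_subtractf algebra_simps)
next
  case False
  with \<open>j \<le> N\<close> have "j = 0 \<or> j = N"
    by auto
  with False show ?thesis
    by (auto simp: half_laplacian_def)
qed

lemma wedge_sine_expansion:
  assumes "N \<ge> 2" "j \<le> N"
  shows "wedge N j = real j + (\<Sum>m=1..N-1. wedge_coeff N m * sine_mode N m j)"
  using sum_cot_mul_sin[of N j] assms
  by (cases "j = 0") (simp_all add: wedge_def wedge_coeff_def sine_mode_def)

lemma half_laplacian_pow_wedge:
  assumes "N \<ge> 2" "j \<le> N"
  shows "(half_laplacian N ^^ n) (wedge N) j
       = (if n = 0 then real j else 0)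
         + (\<Sum>m=1..N-1. wedge_coeff N m * (mode_cos N m - 1) ^ n * sine_mode N m j)"
  using assms(2)
proof (induction n arbitrary: j)
  case 0
  then show ?case
    using wedge_sine_expansion[OF assms(1)] by simp
next
  case (Suc n)
  have "half_laplacian N ((half_laplacian N ^^ n) (wedge N)) j
      = (\<Sum>m=1..N-1. wedge_coeff N m * (mode_cos N m - 1) ^ n * (mode_cos N m - 1)
           * sine_mode N m j)"
    using Suc by (intro half_laplacian_sine_expansion[where c = "if n = 0 then 1 else 0"]) auto
  then show ?case
    by (simp add: mult_ac)
qed

lemma neighbour_average_pow_wedge:
  assumes "N \<ge> 2" "j \<le> N"
  shows "(neighbour_average N ^^ n) (wedge N) j
       = real j + (\<Sum>m=1..N-1. wedge_coeff N m * mode_cos N m ^ n * sine_mode N m j)"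
  using assms(2)
proof (induction n arbitrary: j)
  case 0
  then show ?case
    using wedge_sine_expansion[OF assms(1)] by simp
next
  case (Suc n)
  have "half_laplacian N ((neighbour_average N ^^ n) (wedge N)) j
      = (\<Sum>m=1..N-1. wedge_coeff N m * mode_cos N m ^ n * (mode_cos N m - 1) * sine_mode N m j)"
    using Suc by (intro half_laplacian_sine_expansion[where c = 1]) auto
  then show ?case
    using Suc neighbour_average_def[of N "(neighbour_average N ^^ n) (wedge N)" j]
    by (simp add: sum.distrib[symmetric] algebra_simps)
qed

lemma neighbour_average_bounds:
  assumes "\<And>j. j \<le> N \<Longrightarrow> a \<le> y j \<and> y j \<le> b" and "j \<le> N"
  shows "a \<le> neighbour_average N y j \<and> neighbour_average N y j \<le> b"
proof (cases "1 \<le> j \<and> j \<le> N - 1")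
  case True
  then have "a \<le> y (j - 1) \<and> y (j - 1) \<le> b" "a \<le> y (j + 1) \<and> y (j + 1) \<le> b"
    using assms(1) by auto
  with True show ?thesis
    by (simp add: neighbour_average_def half_laplacian_def)
next
  case False
  then show ?thesis
    using assms by (auto simp: neighbour_average_def half_laplacian_def)
qed

lemma neighbour_average_pow_wedge_bounds:
  assumes "j \<le> N"
  shows "0 \<le> (neighbour_average N ^^ n) (wedge N) j
       \<and> (neighbour_average N ^^ n) (wedge N) j \<le> real N"
  using assms
proof (induction n arbitrary: j)
  case 0
  then show ?case by (simp add: wedge_def)
next
  case (Suc n)
  then show ?case
    by (simp add: neighbour_average_bounds[where a = 0 and b = "real N"])
qed

lemma
  fixes \<alpha> :: real
  assumes "\<alpha> > 0"
  shows has_integral_rho: "(rho \<alpha> has_integral 1) {0..1}"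
    and has_integral_rho_mean: "((\<lambda>u. u * rho \<alpha> u) has_integral 1 / 2) {0..1}"
proof -
  define G where "G = Gamma (2 * \<alpha>) / (Gamma \<alpha>)^2"
  have not_nonpos_int: "z \<notin> \<int>\<^sub>\<le>\<^sub>0" if "z > 0" for z :: real
    using that by (auto elim!: nonpos_Ints_cases)
  have Gamma_pos: "Gamma \<alpha> > 0" "Gamma (2 * \<alpha>) > 0" "Gamma (\<alpha> * 2) > 0"
    using assms by auto
  have Gamma_succ: "Gamma (\<alpha> + 1) = \<alpha> * Gamma \<alpha>" "Gamma (\<alpha> + 1 + \<alpha>) = 2 * \<alpha> * Gamma (2 * \<alpha>)"
    using Gamma_plus1[OF not_nonpos_int, of \<alpha>] Gamma_plus1[OF not_nonpos_int, of "2 * \<alpha>"] assms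
    by (simp_all add: algebra_simps)
  have rho_eq: "rho \<alpha> u = G * (u powr (\<alpha> - 1) * (1 - u) powr (\<alpha> - 1))" if "u \<in> {0..1}" for u
    using that by (simp add: rho_def G_def powr_mult)
  have u_rho_eq: "u * rho \<alpha> u = G * (u powr \<alpha> * (1 - u) powr (\<alpha> - 1))" if "u \<in> {0..1}" for u
  proof (cases "u = 0")
    case False
    then show ?thesis
      using that rho_eq[OF that] powr_mult_base[of u "\<alpha> - 1"] by simp
  qed simp
  have total_mass: "G * Beta \<alpha> \<alpha> = 1"
    using Gamma_pos by (simp add: G_def Beta_def power2_eq_square)
  have "((\<lambda>u. G * (u powr (\<alpha> - 1) * (1 - u) powr (\<alpha> - 1))) has_integral G * Beta \<alpha> \<alpha>) {0..1}"
    using has_integral_Beta_real[OF assms assms] by (rule has_integral_mult_right)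
  then have "((\<lambda>u. G * (u powr (\<alpha> - 1) * (1 - u) powr (\<alpha> - 1))) has_integral 1) {0..1}"
    unfolding total_mass .
  then show "(rho \<alpha> has_integral 1) {0..1}"
    by (rule has_integral_eq[rotated]) (simp add: rho_eq)
  have "Gamma \<alpha> \<noteq> 0" "Gamma (\<alpha> * 2) \<noteq> 0"
    using Gamma_pos by simp_all
  then have mean: "G * Beta (\<alpha> + 1) \<alpha> = 1 / 2"
    using assms unfolding G_def Beta_def Gamma_succ by (simp add: power2_eq_square field_simps)
  have "((\<lambda>u. u powr (\<alpha> + 1 - 1) * (1 - u) powr (\<alpha> - 1)) has_integral Beta (\<alpha> + 1) \<alpha>) {0..1}"
    using assms by (intro has_integral_Beta_real) simp_all
  then have "((\<lambda>u. G * (u powr \<alpha> * (1 - u) powr (\<alpha> - 1))) has_integral G * Beta (\<alpha> + 1) \<alpha>) {0..1}"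
    by (simp add: has_integral_mult_right)
  then have "((\<lambda>u. G * (u powr \<alpha> * (1 - u) powr (\<alpha> - 1))) has_integral 1 / 2) {0..1}"
    unfolding mean .
  then show "((\<lambda>u. u * rho \<alpha> u) has_integral 1 / 2) {0..1}"
    by (rule has_integral_eq[rotated]) (simp add: u_rho_eq)
qed

text \<open>Spelled out because \<open>nat \<Rightarrow> real\<close> has no \<open>real_vector\<close> instance.\<close>
definition linear_observable :: "((nat \<Rightarrow> real) \<Rightarrow> real) \<Rightarrow> bool" where
  "linear_observable f \<longleftrightarrow> (\<forall>x z c. f (\<lambda>j. x j + c * z j) = f x + c * f z)"

lemma linear_observableD: "linear_observable f \<Longrightarrow> f (\<lambda>j. x j + c * z j) = f x + c * f z"
  unfolding linear_observable_def by blast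

lemma linear_observable_sum:
  assumes "linear_observable f" "finite I"
  shows "f (\<lambda>j. \<Sum>i\<in>I. c i * g i j) = (\<Sum>i\<in>I. c i * f (g i))"
  using assms(2)
proof (induction I rule: finite_induct)
  case empty
  have "f (\<lambda>j. 0) = f (\<lambda>j. 0) + 1 * f (\<lambda>j. 0)"
    using linear_observableD[OF assms(1), of "\<lambda>j. 0" 1 "\<lambda>j. 0"] by simp
  then show ?case by simp
next
  case (insert i I)
  then show ?case
    using linear_observableD[OF assms(1), of "\<lambda>j. \<Sum>i\<in>I. c i * g i j" "c i" "g i"]
    by (simp add: add.commute)
qed

lemma half_laplacian_linear:
  "half_laplacian N (\<lambda>j. x j + c * z j) = (\<lambda>j. half_laplacian N x j + c * half_laplacian N z j)"
  by (rule ext) (simp add: half_laplacian_def algebra_simps add_divide_distrib)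

lemma linear_observable_half_laplacian_pow:
  assumes "linear_observable f"
  shows "linear_observable (\<lambda>x. f ((half_laplacian N ^^ n) x))"
proof -
  have "(half_laplacian N ^^ n) (\<lambda>j. x j + c * z j)
      = (\<lambda>j. (half_laplacian N ^^ n) x j + c * (half_laplacian N ^^ n) z j)" for x z c
    by (induction n) (simp_all add: half_laplacian_linear)
  then show ?thesis
    using assms unfolding linear_observable_def by simp
qed

lemma half_laplacian_eq_sum_unit_vectors:
  "half_laplacian N y = (\<lambda>j. \<Sum>i=1..N-1. half_laplacian N y i * of_bool (j = i))"
  by (rule ext) (auto simp: half_laplacian_def)

text \<open>Resampling site \<open>i\<close> moves \<open>x\<^sub>i\<close> by an amount affine in \<open>u\<close>; since \<open>\<rho>\<^sub>\<alpha>\<close> has mean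
  \<open>1/2\<close>, the expected move is exactly \<open>half_laplacian N x i\<close>.\<close>
lemma gen_affine:
  assumes "\<alpha> > 0" "linear_observable f"
  shows "gen N \<alpha> (\<lambda>x. f x + d) y = f (half_laplacian N y)"
proof -
  define e where "e i = f (\<lambda>j. of_bool (j = i))" for i
  have resample_eq: "resample y i u
      = (\<lambda>j. y j + (u * (y (i - 1) - y (i + 1)) + (y (i + 1) - y i)) * of_bool (j = i))" for i u
    by (rule ext) (simp add: resample_def algebra_simps)
  have integral_term: "integral {0..1} (\<lambda>u. (f (resample y i u) + d - (f y + d)) * rho \<alpha> u)
      = half_laplacian N y i * e i" if "i \<in> {1..N-1}" for i
  proof -
    define A where "A = (y (i - 1) - y (i + 1)) * e i"
    define B where "B = (y (i + 1) - y i) * e i"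
    have resample_value:
      "f (resample y i u) = f y + (u * (y (i - 1) - y (i + 1)) + (y (i + 1) - y i)) * e i" for u
      unfolding resample_eq e_def by (rule linear_observableD[OF assms(2)])
    have integrand: "(\<lambda>u. (f (resample y i u) + d - (f y + d)) * rho \<alpha> u)
        = (\<lambda>u. u * rho \<alpha> u * A + rho \<alpha> u * B)"
      by (simp add: resample_value fun_eq_iff A_def B_def algebra_simps)
    have "((\<lambda>u. u * rho \<alpha> u * A + rho \<alpha> u * B) has_integral (1 / 2 * A + 1 * B)) {0..1}"
      using assms(1) by (intro has_integral_add has_integral_mult_left has_integral_rho has_integral_rho_mean)
    then show ?thesis
      using that unfolding integrand by (simp add: integral_unique half_laplacian_def A_def B_def algebra_simps)
  qed
  have "gen N \<alpha> (\<lambda>x. f x + d) y = (\<Sum>i=1..N-1. half_laplacian N y i * e i)"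
    unfolding gen_def by (rule sum.cong[OF refl]) (rule integral_term)
  also have "\<dots> = f (\<lambda>j. \<Sum>i=1..N-1. half_laplacian N y i * of_bool (j = i))"
    unfolding e_def by (rule linear_observable_sum[OF assms(2) finite_atLeastAtMost, symmetric])
  also have "\<dots> = f (half_laplacian N y)"
    by (rule arg_cong[where f = f, OF half_laplacian_eq_sum_unit_vectors[symmetric]])
  finally show ?thesis .
qed

lemma gen_pow_affine:
  assumes "\<alpha> > 0" "linear_observable f"
  shows "(gen N \<alpha> ^^ n) (\<lambda>x. f x + d)
       = (\<lambda>x. f ((half_laplacian N ^^ n) x) + (if n = 0 then d else 0))"
proof (induction n)
  case 0
  then show ?case by simp
next
  case (Suc n)
  have "(gen N \<alpha> ^^ Suc n) (\<lambda>x. f x + d)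
      = gen N \<alpha> (\<lambda>x. f ((half_laplacian N ^^ n) x) + (if n = 0 then d else 0))"
    by (simp only: funpow.simps o_apply Suc.IH)
  also have "\<dots> = (\<lambda>y. f ((half_laplacian N ^^ Suc n) y))"
    using gen_affine[OF assms(1) linear_observable_half_laplacian_pow[OF assms(2)]]
    by (simp add: fun_eq_iff funpow_Suc_right del: funpow.simps)
  finally show ?case
    by simp
qed

lemma semigroup_affine:
  assumes "\<alpha> > 0" "linear_observable f"
    and "(\<lambda>n. t ^ n / fact n * f ((half_laplacian N ^^ n) x)) sums s"
  shows "semigroup N \<alpha> t (\<lambda>x. f x + d) x = s + d"
proof -
  have "(\<lambda>n. t ^ n / fact n * ((gen N \<alpha> ^^ n) (\<lambda>x. f x + d)) x)
      = (\<lambda>n. t ^ n / fact n * f ((half_laplacian N ^^ n) x) + (if n = 0 then d else 0))"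
    unfolding gen_pow_affine[OF assms(1,2)] by (simp add: fun_eq_iff)
  moreover have "(\<lambda>n. t ^ n / fact n * f ((half_laplacian N ^^ n) x) + (if n = 0 then d else 0))
      sums (s + d)"
    using assms(3) sums_single[of 0 "\<lambda>_. d"] by (rule sums_add)
  ultimately show ?thesis
    unfolding semigroup_def by (simp add: sums_iff)
qed

lemma sums_exp_combination:
  fixes g r :: "nat \<Rightarrow> real"
  shows "(\<lambda>n. t ^ n / fact n * (\<Sum>m\<in>I. g m * r m ^ n)) sums (\<Sum>m\<in>I. g m * exp (r m * t))"
proof -
  have "(\<lambda>n. t ^ n / fact n * r m ^ n) sums exp (r m * t)" for m
    using exp_converges[of "r m * t"] by (simp add: power_mult_distrib divide_inverse mult_ac)
  then have "(\<lambda>n. \<Sum>m\<in>I. g m * (t ^ n / fact n * r m ^ n)) sums (\<Sum>m\<in>I. g m * exp (r m * t))"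
    by (intro sums_sum sums_mult)
  then show ?thesis
    by (simp add: sum_distrib_left mult_ac)
qed

definition wedge_mean :: "nat \<Rightarrow> real \<Rightarrow> nat \<Rightarrow> real" where
  "wedge_mean N t k
     = real k + (\<Sum>m=1..N-1. wedge_coeff N m * sine_mode N m k * exp ((mode_cos N m - 1) * t))"

lemma sums_half_laplacian_pow_wedge:
  assumes "N \<ge> 2" "k \<le> N"
  shows "(\<lambda>n. t ^ n / fact n * (half_laplacian N ^^ n) (wedge N) k) sums wedge_mean N t k"
proof -
  have "(\<lambda>n. (if n = 0 then real k else 0)
        + t ^ n / fact n * (\<Sum>m=1..N-1. (wedge_coeff N m * sine_mode N m k) * (mode_cos N m - 1) ^ n))
      sums wedge_mean N t k"
    unfolding wedge_mean_def by (intro sums_add sums_exp_combination sums_single)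
  moreover have "(\<lambda>n. t ^ n / fact n * (half_laplacian N ^^ n) (wedge N) k)
      = (\<lambda>n. (if n = 0 then real k else 0)
        + t ^ n / fact n * (\<Sum>m=1..N-1. (wedge_coeff N m * sine_mode N m k) * (mode_cos N m - 1) ^ n))"
    by (rule ext) (auto simp: half_laplacian_pow_wedge[OF assms] sum_distrib_left algebra_simps)
  ultimately show ?thesis
    by simp
qed

text \<open>Probabilistically \<open>X\<^sub>k(t) \<le> N\<close>; analytically, \<open>e\<^sup>t\<close> times the mean is the
  exponential series of the averaging iterates of the wedge, which stay in \<open>[0, N]\<close>.\<close>
lemma wedge_mean_le_N:
  assumes "N \<ge> 2" "k \<le> N" "t \<ge> 0"
  shows "wedge_mean N t k \<le> real N"
proof -
  have exp_t: "(\<lambda>n. t ^ n / fact n) sums exp t"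
    using exp_converges[of t] by (simp add: divide_inverse mult.commute)
  have "(\<lambda>n. t ^ n / fact n * real k
        + t ^ n / fact n * (\<Sum>m=1..N-1. (wedge_coeff N m * sine_mode N m k) * mode_cos N m ^ n))
      sums (exp t * real k + (\<Sum>m=1..N-1. wedge_coeff N m * sine_mode N m k * exp (mode_cos N m * t)))"
    using exp_t by (intro sums_add sums_exp_combination sums_mult2)
  then have average_series: "(\<lambda>n. t ^ n / fact n * (neighbour_average N ^^ n) (wedge N) k)
      sums (exp t * wedge_mean N t k)"
    using assms
    by (simp add: neighbour_average_pow_wedge wedge_mean_def sum_distrib_left exp_diff algebra_simps)
  have "exp t * wedge_mean N t k \<le> exp t * real N"
    using neighbour_average_pow_wedge_bounds[OF assms(2)] assms(3)
    by (intro sums_le[OF _ average_series sums_mult2[OF exp_t]] mult_left_mono) auto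
  then show ?thesis
    by simp
qed

lemma mul_cos_le_sin:
  fixes y :: real
  assumes "0 \<le> y" "y \<le> pi"
  shows "y * cos y \<le> sin y"
proof -
  have "\<exists>d. ((\<lambda>y. sin y - y * cos y) has_real_derivative d) (at u) \<and> d \<ge> 0" if "0 \<le> u" "u \<le> y" for u
  proof (intro exI conjI)
    show "((\<lambda>y. sin y - y * cos y) has_real_derivative u * sin u) (at u)"
      by (auto intro!: derivative_eq_intros simp: algebra_simps)
    show "u * sin u \<ge> 0"
      using that assms by (intro mult_nonneg_nonneg sin_ge_zero) auto
  qed
  then have "sin 0 - 0 * cos 0 \<le> sin y - y * cos y"
    using DERIV_nonneg_imp_nondecreasing[OF assms(1)] by blast
  then show ?thesis
    by simp
qed

lemma wedge_coeff_bounds: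
  assumes "1 \<le> m" "m < N"
  shows "0 \<le> wedge_coeff N m \<and> wedge_coeff N m \<le> real N"
proof -
  define y where "y = real m * pi / (2 * real N)"
  have "0 < y" "y < pi / 2"
    using assms by (simp_all add: y_def field_simps)
  then have sin_pos: "sin y > 0" and cos_pos: "cos y > 0"
    by (simp_all add: sin_gt_zero cos_gt_zero)
  have "cot y \<le> 1 / y"
    using mul_cos_le_sin[of y] \<open>0 < y\<close> \<open>y < pi / 2\<close> sin_pos by (simp add: cot_def field_simps)
  also have "\<dots> \<le> 2 * real N / pi"
    using assms by (simp add: y_def field_simps)
  also have "\<dots> \<le> real N"
    using mult_right_mono[OF pi_ge_two, of "real N"] by (simp add: field_simps)
  finally show ?thesis
    using sin_pos cos_pos by (simp add: wedge_coeff_def y_def[symmetric] cot_def)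
qed

text \<open>The increment \<open>2 sin ((2j+1)x/2) sin (x/2)\<close> of \<open>1 - cos\<close> on \<open>[jx, (j+1)x]\<close>
  dominates the first one as long as \<open>(j+1)x \<le> \<pi>\<close>.\<close>
lemma one_minus_cos_le_cos_diff:
  fixes x :: real
  assumes "0 < x" "real (Suc j) * x \<le> pi"
  shows "1 - cos x \<le> cos (real j * x) - cos (real (Suc j) * x)"
proof -
  have half_angles: "(real j * x + real (Suc j) * x) / 2 = (2 * real j + 1) * x / 2"
      "(real (Suc j) * x - real j * x) / 2 = x / 2"
      "((2 * real j + 1) * x / 2 - x / 2) / 2 = real j * x / 2"
      "((2 * real j + 1) * x / 2 + x / 2) / 2 = real (Suc j) * x / 2"
    by (simp_all add: algebra_simps)
  have "0 \<le> real j * x" "real j * x + x = real (Suc j) * x"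
    using assms(1) by (simp_all add: algebra_simps)
  then have "0 \<le> sin (real j * x / 2)" "0 \<le> cos (real (Suc j) * x / 2)" and sin_half: "0 \<le> sin (x / 2)"
    using assms by (intro sin_ge_zero cos_ge_zero; linarith)+
  moreover have "sin ((2 * real j + 1) * x / 2) - sin (x / 2)
      = 2 * sin (real j * x / 2) * cos (real (Suc j) * x / 2)"
    using sin_diff_sin[of "(2 * real j + 1) * x / 2" "x / 2"] unfolding half_angles .
  ultimately have "sin (x / 2) \<le> sin ((2 * real j + 1) * x / 2)"
    by (metis diff_ge_0_iff_ge mult_nonneg_nonneg zero_le_numeral)
  then have "sin (x / 2) * sin (x / 2) \<le> sin ((2 * real j + 1) * x / 2) * sin (x / 2)"
    using sin_half by (rule mult_right_mono)
  moreover have "cos (real j * x) - cos (real (Suc j) * x)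
      = 2 * sin ((2 * real j + 1) * x / 2) * sin (x / 2)"
    using cos_diff_cos[of "real j * x" "real (Suc j) * x"] unfolding half_angles .
  moreover have "1 - cos x = 2 * sin (x / 2) * sin (x / 2)"
    using cos_diff_cos[of 0 x] by simp
  ultimately show ?thesis
    by simp
qed

lemma gap_mul_le:
  assumes "N > 0" "m \<le> N"
  shows "real m * gap N \<le> 1 - mode_cos N m"
  using assms(2)
proof (induction m)
  case 0
  then show ?case by (simp add: mode_cos_def)
next
  case (Suc m)
  have "real (Suc m) * (pi / real N) \<le> real N * (pi / real N)"
    using Suc.prems by (intro mult_right_mono) simp_all
  then have "gap N \<le> mode_cos N m - mode_cos N (Suc m)"
    using one_minus_cos_le_cos_diff[of "pi / real N" m] assms
    by (simp add: gap_def mode_cos_def mult_ac)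
  then show ?case
    using Suc by (simp add: algebra_simps)
qed

lemma sum_powers_le:
  fixes q :: real
  assumes "0 \<le> q" "q \<le> 1 / 2"
  shows "(\<Sum>m=1..M. q ^ m) \<le> 2 * q - 2 * q ^ Suc M"
proof (induction M)
  case 0
  then show ?case by simp
next
  case (Suc M)
  have "q ^ Suc M * (1 - 2 * q) \<ge> 0"
    using assms by simp
  then show ?case
    using Suc by (simp add: algebra_simps)
qed

lemma wedge_mode_le:
  assumes "N > 0" "m \<in> {1..N-1}" "t \<ge> 0"
  shows "wedge_coeff N m * sine_mode N m k * exp ((mode_cos N m - 1) * t)
       \<le> real N * exp (- gap N * t) ^ m"
proof -
  have coeff: "0 \<le> wedge_coeff N m" "wedge_coeff N m \<le> real N"
    using wedge_coeff_bounds[of m N] assms(2) by auto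
  have "real m * gap N * t \<le> (1 - mode_cos N m) * t"
    using gap_mul_le[OF assms(1), of m] assms(2,3) by (intro mult_right_mono) auto
  then have decay: "exp ((mode_cos N m - 1) * t) \<le> exp (- gap N * t) ^ m"
    unfolding exp_of_nat_mult[symmetric] by (simp add: algebra_simps)
  have "wedge_coeff N m * sine_mode N m k * exp ((mode_cos N m - 1) * t)
      \<le> wedge_coeff N m * exp ((mode_cos N m - 1) * t)"
    using coeff by (intro mult_right_mono) (auto simp: sine_mode_def mult_left_le)
  also have "\<dots> \<le> real N * exp (- gap N * t) ^ m"
    using coeff decay by (intro mult_mono) auto
  finally show ?thesis .
qed

text \<open>Once \<open>exp (- gap N * t) \<le> 1/2\<close> the modes are dominated by a geometric series;
  before that, the trivial bound \<open>N\<close> is already below \<open>2 N exp (- gap N * t)\<close>.\<close>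
lemma wedge_mean_le:
  assumes "N \<ge> 2" "k \<le> N" "t \<ge> 0"
  shows "wedge_mean N t k \<le> real k + 2 * real N * exp (- gap N * t)"
proof (cases "exp (- gap N * t) \<le> 1 / 2")
  case True
  define q where "q = exp (- gap N * t)"
  have "0 \<le> q" "q \<le> 1 / 2"
    using True by (simp_all add: q_def)
  then have "(\<Sum>m=1..N-1. q ^ m) \<le> 2 * q"
    using sum_powers_le[of q "N - 1"] zero_le_power[of q "Suc (N - 1)"] by linarith
  then have "(\<Sum>m=1..N-1. real N * q ^ m) \<le> real N * (2 * q)"
    unfolding sum_distrib_left[symmetric] by (intro mult_left_mono) auto
  moreover have "(\<Sum>m=1..N-1. wedge_coeff N m * sine_mode N m k * exp ((mode_cos N m - 1) * t))
      \<le> (\<Sum>m=1..N-1. real N * q ^ m)"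
    unfolding q_def using assms by (intro sum_mono wedge_mode_le) auto
  ultimately show ?thesis
    by (simp add: wedge_mean_def q_def)
next
  case False
  then have "real N * 1 \<le> real N * (2 * exp (- gap N * t))"
    by (intro mult_left_mono) auto
  then show ?thesis
    using wedge_mean_le_N[OF assms] by simp
qed

lemma semigroup_coordinate_wedge:
  assumes "\<alpha> > 0" "N \<ge> 2" "k \<le> N"
  shows "semigroup N \<alpha> t (\<lambda>x. x k) (wedge N) = wedge_mean N t k"
proof -
  have "linear_observable (\<lambda>x. x k)"
    by (simp add: linear_observable_def)
  from semigroup_affine[OF assms(1) this sums_half_laplacian_pow_wedge[OF assms(2,3)], where d = 0]
  show ?thesis
    by simp
qed

lemma mult_div_le:
  fixes l N K :: nat
  assumes "l \<le> K"
  shows "l * N div K \<le> N"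
proof (cases "K = 0")
  case False
  have "l * N div K \<le> K * N div K"
    using assms by (intro div_le_mono mult_le_mono1)
  then show ?thesis
    using False by simp
qed simp

lemma semigroup_Wfun_wedge:
  assumes "\<alpha> > 0" "N \<ge> 2"
  shows "semigroup N \<alpha> t (Wfun N K) (wedge N)
       = (\<Sum>l=1..K-1. wedge_mean N t (l * N div K) - real (l * N div K))"
proof -
  define u where "u l = l * N div K" for l
  have linear: "linear_observable (\<lambda>x. \<Sum>l=1..K-1. x (u l))"
    by (simp add: linear_observable_def sum.distrib sum_distrib_left)
  have series: "(\<lambda>n. t ^ n / fact n * (\<Sum>l=1..K-1. (half_laplacian N ^^ n) (wedge N) (u l)))
      sums (\<Sum>l=1..K-1. wedge_mean N t (u l))"
    unfolding sum_distrib_left u_def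
    by (intro sums_sum sums_half_laplacian_pow_wedge[OF assms(2)] mult_div_le) auto
  have Wfun_eq: "Wfun N K = (\<lambda>x. (\<Sum>l=1..K-1. x (u l)) + - (\<Sum>l=1..K-1. real (u l)))"
    by (simp add: Wfun_def u_def fun_eq_iff sum_subtractf)
  have "semigroup N \<alpha> t (Wfun N K) (wedge N)
      = (\<Sum>l=1..K-1. wedge_mean N t (u l)) + - (\<Sum>l=1..K-1. real (u l))"
    unfolding Wfun_eq by (rule semigroup_affine[OF assms(1) linear series])
  then show ?thesis
    by (simp add: u_def sum_subtractf)
qed

theorem proposition6p7:
  fixes N K :: nat and \<alpha> :: real
  assumes "\<alpha> \<ge> 1" and "N \<ge> 2"
  shows "(\<forall>k \<in> {1..N - 1}. \<forall>t \<ge> 0.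
            semigroup N \<alpha> t (\<lambda>x. x k) (wedge N) \<le> real k + 2 * real N * exp (- gap N * t))
       \<and> (\<forall>t \<ge> 0. semigroup N \<alpha> t (Wfun N K) (wedge N) \<le> 2 * real K * real N * exp (- gap N * t))"
proof (intro conjI ballI allI impI)
  have \<alpha>: "\<alpha> > 0"
    using assms(1) by simp
  fix t :: real
  assume t: "t \<ge> 0"
  show "semigroup N \<alpha> t (\<lambda>x. x k) (wedge N) \<le> real k + 2 * real N * exp (- gap N * t)"
    if "k \<in> {1..N - 1}" for k
  proof -
    have "k \<le> N"
      using that by auto
    then show ?thesis
      using semigroup_coordinate_wedge[OF \<alpha> assms(2)] wedge_mean_le[OF assms(2) _ t] by simp
  qed
  have "semigroup N \<alpha> t (Wfun N K) (wedge N) \<le> (\<Sum>l=1..K-1. 2 * real N * exp (- gap N * t))"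
    unfolding semigroup_Wfun_wedge[OF \<alpha> assms(2)]
  proof (rule sum_mono)
    fix l assume "l \<in> {1..K-1}"
    then have "l * N div K \<le> N"
      by (intro mult_div_le) auto
    then show "wedge_mean N t (l * N div K) - real (l * N div K) \<le> 2 * real N * exp (- gap N * t)"
      using wedge_mean_le[OF assms(2) _ t] by (simp add: algebra_simps)
  qed
  also have "\<dots> = real (K - 1) * (2 * real N * exp (- gap N * t))"
    by simp
  also have "\<dots> \<le> real K * (2 * real N * exp (- gap N * t))"
    by (intro mult_right_mono) auto
  finally show "semigroup N \<alpha> t (Wfun N K) (wedge N) \<le> 2 * real K * real N * exp (- gap N * t)"
    by (simp add: mult_ac)
qed

end
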